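(* Consider the following algorithm producing an $n\times n$ $(0,1)$-matrix $P=[p_{ij}]$: start with $P=O$; choose some $i\in\{1,\ldots,n\}$ and set $p_{i1}=1$; then for $k=1,2,\ldots,n-1$: if $I^*_k(P)=\emptyset$, stop; otherwise choose some $i\in I^*_k(P)$ and set $p_{i,k+1}=1$. If the algorithm never stops early (i.e. $I^*_k(P)\ne\emptyset$ at every step), then the resulting matrix is a convex permutation matrix. Conversely, every convex $n\times n$ permutation matrix can be obtained as the output of this algorithm for a suitable sequence of choices.
   Context: A subpermutation matrix is a $(0,1)$-matrix with at most one $1$ in each row and column. A permutation matrix $P$ of the permutation $\pi$ of $\{1,\ldots,n\}$ (with $1$'s in positions $(i,\pi_i)$) is convex if $\pi_2-\pi_1\le\pi_3-\pi_2\le\cdots\le\pi_n-\pi_{n-1}$. For a subpermutation matrix $P$, $I_k(P)$ is the set of rows containing a $1$ in one of the first $k$ columns. For $k\le n$, an $n\times n$ subpermutation matrix $P$ is $k$-convex if (i) each of its first $k$ columns contains exactly one $1$, (ii) $I_k(P)$ is an interval $\{r,r+1,\ldots,s\}$ of consecutive integers, and (iii) $\pi_{i+1}-\pi_i\le\pi_{i+2}-\pi_{i+1}$ for $i=r,\ldots,s-2$, where $\pi_i$ denotes the column of the unique $1$ in row $i$. For a $k$-convex subpermutation matrix $P$ whose columns $k+1,\ldots,n$ are zero, with $I_k(P)=\{r,\ldots,s\}$, the set $I^*_k(P)\subseteq\{r-1,s+1\}$ is defined by: $r-1\in I^*_k(P)$ iff $r>1$ and the matrix obtained from $P$ by putting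 a $1$ in position $(r-1,k+1)$ is $(k+1)$-convex; $s+1\in I^*_k(P)$ iff $s<n$ and the matrix obtained from $P$ by putting a $1$ in position $(s+1,k+1)$ is $(k+1)$-convex. *)

theory Defs
  imports Main
begin

text \<open>An n x n (0,1)-matrix is represented by the set of positions (i,j) (1-based,
  1 <= i,j <= n) carrying a 1.\<close>

definition subperm :: "nat \<Rightarrow> (nat \<times> nat) set \<Rightarrow> bool" where
  "subperm n P \<longleftrightarrow> P \<subseteq> {1..n} \<times> {1..n}
     \<and> (\<forall>i j j'. (i,j) \<in> P \<and> (i,j') \<in> P \<longrightarrow> j = j')
     \<and> (\<forall>i i' j. (i,j) \<in> P \<and> (i',j) \<in> P \<longrightarrow> i = i')"

definition pcol :: "(nat \<times> nat) set \<Rightarrow> nat \<Rightarrow> nat" where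
  "pcol P i = (THE j. (i,j) \<in> P)"

definition Ik :: "nat \<Rightarrow> (nat \<times> nat) set \<Rightarrow> nat set" where
  "Ik k P = {i. \<exists>j\<in>{1..k}. (i,j) \<in> P}"

definition kconvex :: "nat \<Rightarrow> nat \<Rightarrow> (nat \<times> nat) set \<Rightarrow> bool" where
  "kconvex n k P \<longleftrightarrow> k \<le> n \<and> subperm n P
     \<and> (\<forall>j\<in>{1..k}. \<exists>!i. (i,j) \<in> P)
     \<and> (\<exists>r s. Ik k P = {r..s}
          \<and> (\<forall>i. r \<le> i \<and> i + 2 \<le> s \<longrightarrow>
               int (pcol P (i+1)) - int (pcol P i) \<le> int (pcol P (i+2)) - int (pcol P (i+1))))"

definition Istar :: "nat \<Rightarrow> nat \<Rightarrow> (nat \<times> nat) set \<Rightarrow> nat set" where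
  "Istar n k P =
     {i. (1 < Min (Ik k P) \<and> i = Min (Ik k P) - 1 \<and> kconvex n (k+1) (insert (i, k+1) P))
       \<or> (Max (Ik k P) < n \<and> i = Max (Ik k P) + 1 \<and> kconvex n (k+1) (insert (i, k+1) P))}"

text \<open>Runs of the algorithm: alg_reach n k P means that after having filled the first k
  columns (without stopping) the algorithm can be in state P.\<close>
inductive alg_reach :: "nat \<Rightarrow> nat \<Rightarrow> (nat \<times> nat) set \<Rightarrow> bool" for n where
  start: "i \<in> {1..n} \<Longrightarrow> alg_reach n 1 {(i,1)}"
| step: "alg_reach n k P \<Longrightarrow> 1 \<le> k \<Longrightarrow> k \<le> n - 1 \<Longrightarrow> i \<in> Istar n k P
           \<Longrightarrow> alg_reach n (k+1) (insert (i, k+1) P)"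

definition perm_matrix :: "nat \<Rightarrow> (nat \<Rightarrow> nat) \<Rightarrow> (nat \<times> nat) set" where
  "perm_matrix n \<pi> = {(i, \<pi> i) | i. i \<in> {1..n}}"

definition convex_perm_matrix :: "nat \<Rightarrow> (nat \<times> nat) set \<Rightarrow> bool" where
  "convex_perm_matrix n P \<longleftrightarrow> (\<exists>\<pi>. bij_betw \<pi> {1..n} {1..n} \<and> P = perm_matrix n \<pi>
     \<and> (\<forall>i. 1 \<le> i \<and> i + 2 \<le> n \<longrightarrow>
          int (\<pi> (i+1)) - int (\<pi> i) \<le> int (\<pi> (i+2)) - int (\<pi> (i+1))))"

end

theory Submission
  imports Defs
begin

text \<open>
  Every step of the algorithm keeps the matrix \<open>k\<close>-convex, since that is how \<open>I\<^sup>*\<^sub>k\<close> is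
  defined; an \<open>n\<close>-convex subpermutation matrix has a 1 in every column, hence by counting
  in every row, so it is a convex permutation matrix.

  Conversely, let \<open>\<pi>\<close> be convex and let the algorithm put the 1 of column \<open>k + 1\<close> into row
  \<open>\<pi>\<^sup>-\<^sup>1(k + 1)\<close>. After \<open>k\<close> steps the occupied rows are the sublevel set
  \<open>{i. \<pi> i \<le> k}\<close>, which is an interval because a convex sequence attains its maximum over a
  segment at one of its endpoints. As the occupied rows form an interval both before and
  after step \<open>k + 1\<close>, the new row is adjacent to the old interval, i.e. it lies in
  \<open>I\<^sup>*\<^sub>k\<close>.
\<close>

lemma pcol_eqI: "subperm n P \<Longrightarrow> (i, j) \<in> P \<Longrightarrow> pcol P i = j"
  unfolding pcol_def subperm_def by (rule the_equality) blast+

lemma perm_matrix_eq_image: "perm_matrix n \<pi> = (\<lambda>i. (i, \<pi> i)) ` {1..n}"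
  unfolding perm_matrix_def by blast

lemma mem_perm_matrix_iff: "(i, j) \<in> perm_matrix n \<pi> \<longleftrightarrow> i \<in> {1..n} \<and> j = \<pi> i"
  unfolding perm_matrix_def by blast

definition discrete_convex :: "nat \<Rightarrow> nat \<Rightarrow> (nat \<Rightarrow> 'a::linordered_ab_group_add) \<Rightarrow> bool" where
  "discrete_convex a b f \<longleftrightarrow>
     (\<forall>i. a \<le> i \<and> i + 2 \<le> b \<longrightarrow> f (i+1) - f i \<le> f (i+2) - f (i+1))"

lemma kconvex_iff:
  "kconvex n k P \<longleftrightarrow> k \<le> n \<and> subperm n P \<and> (\<forall>j\<in>{1..k}. \<exists>!i. (i, j) \<in> P)
     \<and> (\<exists>r s. Ik k P = {r..s} \<and> discrete_convex r s (\<lambda>i. int (pcol P i)))"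
  unfolding kconvex_def discrete_convex_def ..

lemma convex_perm_matrix_iff:
  "convex_perm_matrix n P \<longleftrightarrow>
     (\<exists>\<pi>. bij_betw \<pi> {1..n} {1..n} \<and> P = perm_matrix n \<pi> \<and> discrete_convex 1 n (\<lambda>i. int (\<pi> i)))"
  unfolding convex_perm_matrix_def discrete_convex_def ..

lemma discrete_convex_diff_mono:
  assumes conv: "discrete_convex a b f" and "a \<le> i" "i \<le> j" "j < b"
  shows "f (Suc i) - f i \<le> f (Suc j) - f j"
proof (rule lift_Suc_mono_le_ivl[where f = "\<lambda>m. f (Suc m) - f m"])
  show "f (Suc m) - f m \<le> f (Suc (Suc m)) - f (Suc m)" if "m \<in> {a..<b - 1}" for m
  proof -
    have "f (m+1) - f m \<le> f (m+2) - f (m+1)"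
      using conv that unfolding discrete_convex_def by auto
    then show ?thesis by simp
  qed
qed (use assms in auto)

lemma discrete_convex_le_max:
  assumes conv: "discrete_convex a b f" and "a \<le> i" "i \<le> j" "j \<le> k" "k \<le> b"
  shows "f j \<le> max (f i) (f k)"
proof (cases "j < k")
  case jk: True
  show ?thesis
  proof (cases "f j \<le> f (Suc j)")
    case True
    have "f j \<le> f k"
    proof (rule lift_Suc_mono_le_ivl[where N = "{j..<k}"])
      fix m assume "m \<in> {j..<k}"
      from True have "0 \<le> f (Suc j) - f j" by simp
      also have "\<dots> \<le> f (Suc m) - f m"
        using discrete_convex_diff_mono[OF conv, of j m] assms \<open>m \<in> {j..<k}\<close> by simp
      finally show "f m \<le> f (Suc m)" by simp
    qed (use jk in auto)
    then show ?thesis by (rule max.coboundedI2)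
  next
    case False
    have "f j \<le> f i"
    proof (rule lift_Suc_antimono_le_ivl[where N = "{i..<j}"])
      fix m assume "m \<in> {i..<j}"
      then have "f (Suc m) - f m \<le> f (Suc j) - f j"
        using discrete_convex_diff_mono[OF conv, of m j] assms jk by simp
      also from False have "\<dots> < 0" by simp
      finally show "f (Suc m) \<le> f m" by simp
    qed (use assms in auto)
    then show ?thesis by (rule max.coboundedI1)
  qed
qed (use assms in \<open>simp add: max.coboundedI2\<close>)

lemma kconvex_singleton: "i \<in> {1..n} \<Longrightarrow> kconvex n 1 {(i, 1)}"
  unfolding kconvex_def subperm_def Ik_def
  by (intro conjI exI[of _ i]) auto

lemma alg_reach_kconvex: "alg_reach n k P \<Longrightarrow> kconvex n k P"
proof (induction rule: alg_reach.induct)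
  case (start i)
  then show ?case by (rule kconvex_singleton)
next
  case (step k P i)
  then show ?case unfolding Istar_def by blast
qed

lemma subperm_fst_image:
  assumes sp: "subperm n P" and cols: "snd ` P = {1..n}"
  shows "fst ` P = {1..n}"
proof (rule card_subset_eq)
  have "inj_on fst P" "inj_on snd P"
    using sp unfolding subperm_def inj_on_def by (metis prod.collapse)+
  then show "card (fst ` P) = card {1..n}"
    using cols by (metis card_image)
  show "fst ` P \<subseteq> {1..n}" using sp unfolding subperm_def by auto
qed simp

lemma subperm_eq_perm_matrix_pcol:
  assumes sp: "subperm n P" and rows: "fst ` P = {1..n}"
  shows "P = perm_matrix n (pcol P)"
proof (intro set_eqI iffI)
  fix x assume "x \<in> P"
  moreover obtain i j where x: "x = (i, j)" by fastforce
  ultimately have "i \<in> fst ` P" "pcol P i = j" using pcol_eqI[OF sp] by force+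
  then show "x \<in> perm_matrix n (pcol P)" using rows x by (simp add: mem_perm_matrix_iff)
next
  fix x assume "x \<in> perm_matrix n (pcol P)"
  then obtain i where "i \<in> {1..n}" and x: "x = (i, pcol P i)"
    by (cases x) (auto simp: mem_perm_matrix_iff)
  with rows obtain j where "(i, j) \<in> P" by force
  with x show "x \<in> P" using pcol_eqI[OF sp] by simp
qed

lemma subperm_bij_betw_pcol:
  assumes sp: "subperm n P" and rows: "fst ` P = {1..n}" and cols: "snd ` P = {1..n}"
  shows "bij_betw (pcol P) {1..n} {1..n}"
proof -
  have "pcol P ` {1..n} = snd ` P"
    by (subst subperm_eq_perm_matrix_pcol[OF sp rows]) (simp add: perm_matrix_eq_image image_image)
  then show ?thesis
    using cols by (simp add: bij_betw_def eq_card_imp_inj_on)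
qed

lemma Ik_eq_fst_image: "P \<subseteq> A \<times> {1..k} \<Longrightarrow> Ik k P = fst ` P"
  unfolding Ik_def by force

lemma kconvex_imp_convex_perm_matrix:
  assumes "kconvex n n P"
  shows "convex_perm_matrix n P"
proof -
  obtain r s where sp: "subperm n P" and cols_filled: "\<forall>j\<in>{1..n}. \<exists>!i. (i, j) \<in> P"
    and Ik: "Ik n P = {r..s}" and conv: "discrete_convex r s (\<lambda>i. int (pcol P i))"
    using assms unfolding kconvex_iff by blast
  have P_sub: "P \<subseteq> {1..n} \<times> {1..n}" using sp unfolding subperm_def by blast
  have cols: "snd ` P = {1..n}"
  proof
    show "snd ` P \<subseteq> {1..n}" using P_sub by auto
    show "{1..n} \<subseteq> snd ` P" using cols_filled by force
  qed
  have rows: "fst ` P = {1..n}" by (rule subperm_fst_image[OF sp cols])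
  have "discrete_convex 1 n (\<lambda>i. int (pcol P i))"
  proof (cases "n = 0")
    case False
    then have "r = 1" "s = n"
      using Ik Ik_eq_fst_image[OF P_sub] rows by (simp_all add: Icc_eq_Icc)
    with conv show ?thesis by simp
  qed (simp add: discrete_convex_def)
  then show ?thesis
    unfolding convex_perm_matrix_iff
    using subperm_eq_perm_matrix_pcol[OF sp rows] subperm_bij_betw_pcol[OF sp rows cols] by blast
qed

lemma order_convex_eq_Icc_Min_Max:
  fixes S :: "'a::linorder set"
  assumes "finite S" "S \<noteq> {}"
    and between: "\<And>a b c. a \<in> S \<Longrightarrow> c \<in> S \<Longrightarrow> a \<le> b \<Longrightarrow> b \<le> c \<Longrightarrow> b \<in> S"
  shows "S = {Min S..Max S}"
proof
  show "S \<subseteq> {Min S..Max S}" using assms(1) by auto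
  show "{Min S..Max S} \<subseteq> S"
  proof
    fix b assume "b \<in> {Min S..Max S}"
    moreover have "Min S \<in> S" "Max S \<in> S" using assms(1,2) by simp_all
    ultimately show "b \<in> S" using between[of "Min S" "Max S" b] by simp
  qed
qed

lemma insert_Icc_eq_Icc_imp_adjacent:
  fixes x r s :: nat
  assumes "x \<notin> {r..s}" "r \<le> s" "insert x {r..s} = {r'..s'}"
  shows "x + 1 = r \<or> x = s + 1"
proof -
  have mem: "y \<in> {r'..s'} \<longleftrightarrow> y = x \<or> y \<in> {r..s}" for y
    using assms(3) by blast
  show ?thesis
  proof (cases "x < r")
    case True
    then show ?thesis using mem[of x] mem[of s] mem[of "x + 1"] assms(2) by auto
  next
    case False
    then have "s < x" using assms(1) by auto
    then show ?thesis using mem[of x] mem[of r] mem[of "x - 1"] assms(2) by auto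
  qed
qed

locale convex_permutation =
  fixes n :: nat and \<pi> :: "nat \<Rightarrow> nat"
  assumes bij: "bij_betw \<pi> {1..n} {1..n}"
    and convex: "discrete_convex 1 n (\<lambda>i. int (\<pi> i))"
begin

definition row :: "nat \<Rightarrow> nat" where
  "row j = inv_into {1..n} \<pi> j"

lemma row_in: "j \<in> {1..n} \<Longrightarrow> row j \<in> {1..n}"
  unfolding row_def using bij by (metis bij_betw_def inv_into_into)

lemma pi_row: "j \<in> {1..n} \<Longrightarrow> \<pi> (row j) = j"
  unfolding row_def using bij by (simp add: bij_betw_inv_into_right)

lemma row_pi: "i \<in> {1..n} \<Longrightarrow> row (\<pi> i) = i"
  unfolding row_def using bij by (simp add: bij_betw_inv_into_left)

lemma pi_in: "i \<in> {1..n} \<Longrightarrow> \<pi> i \<in> {1..n}"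
  using bij by (rule bij_betw_apply)

definition rows_upto :: "nat \<Rightarrow> nat set" where
  "rows_upto k = {i \<in> {1..n}. \<pi> i \<le> k}"

definition first_columns :: "nat \<Rightarrow> (nat \<times> nat) set" where
  "first_columns k = {(i, \<pi> i) | i. i \<in> rows_upto k}"

lemma mem_first_columns_iff: "(i, j) \<in> first_columns k \<longleftrightarrow> i \<in> rows_upto k \<and> j = \<pi> i"
  unfolding first_columns_def by blast

lemma rows_upto_between:
  assumes "a \<in> rows_upto k" "c \<in> rows_upto k" "a \<le> b" "b \<le> c"
  shows "b \<in> rows_upto k"
proof -
  have "int (\<pi> b) \<le> max (int (\<pi> a)) (int (\<pi> c))"
    using discrete_convex_le_max[OF convex, of a b c] assms unfolding rows_upto_def by auto
  then show ?thesis using assms unfolding rows_upto_def by auto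
qed

lemma rows_upto_eq_Icc:
  assumes "1 \<le> k" "k \<le> n"
  shows "rows_upto k = {Min (rows_upto k)..Max (rows_upto k)}" and "Min (rows_upto k) \<le> Max (rows_upto k)"
proof -
  have "row 1 \<in> rows_upto k"
    using assms row_in pi_row unfolding rows_upto_def by auto
  then have ne: "rows_upto k \<noteq> {}" by blast
  have fin: "finite (rows_upto k)" unfolding rows_upto_def by simp
  show "rows_upto k = {Min (rows_upto k)..Max (rows_upto k)}"
    using order_convex_eq_Icc_Min_Max[OF fin ne rows_upto_between] .
  show "Min (rows_upto k) \<le> Max (rows_upto k)"
    using fin ne by simp
qed

lemma rows_upto_Suc:
  assumes "k < n"
  shows "rows_upto (Suc k) = insert (row (Suc k)) (rows_upto k)" and "row (Suc k) \<notin> rows_upto k"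
proof -
  have k: "Suc k \<in> {1..n}" using assms by simp
  show "row (Suc k) \<notin> rows_upto k"
    using pi_row[OF k] unfolding rows_upto_def by simp
  show "rows_upto (Suc k) = insert (row (Suc k)) (rows_upto k)"
  proof (intro set_eqI iffI)
    fix i assume i: "i \<in> rows_upto (Suc k)"
    show "i \<in> insert (row (Suc k)) (rows_upto k)"
    proof (cases "\<pi> i = Suc k")
      case True
      then show ?thesis using i row_pi unfolding rows_upto_def by force
    qed (use i in \<open>simp add: rows_upto_def\<close>)
  next
    fix i assume "i \<in> insert (row (Suc k)) (rows_upto k)"
    then show "i \<in> rows_upto (Suc k)"
      using row_in[OF k] pi_row[OF k] unfolding rows_upto_def by auto
  qed
qed

lemma first_columns_Suc:
  assumes "k < n"
  shows "first_columns (Suc k) = insert (row (Suc k), Suc k) (first_columns k)"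
proof (rule set_eqI)
  have k: "Suc k \<in> {1..n}" using assms by simp
  fix x :: "nat \<times> nat"
  show "x \<in> first_columns (Suc k) \<longleftrightarrow> x \<in> insert (row (Suc k), Suc k) (first_columns k)"
    using pi_row[OF k] by (cases x) (auto simp: mem_first_columns_iff rows_upto_Suc(1)[OF assms])
qed

lemma subperm_first_columns: "subperm n (first_columns k)"
  unfolding subperm_def
proof (intro conjI allI impI)
  show "first_columns k \<subseteq> {1..n} \<times> {1..n}"
  proof (rule subrelI)
    fix i j assume "(i, j) \<in> first_columns k"
    then show "(i, j) \<in> {1..n} \<times> {1..n}"
      using pi_in by (auto simp: mem_first_columns_iff rows_upto_def)
  qed
next
  fix i j j' assume "(i, j) \<in> first_columns k \<and> (i, j') \<in> first_columns k"
  then show "j = j'" by (simp add: mem_first_columns_iff)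
next
  fix i i' j assume "(i, j) \<in> first_columns k \<and> (i', j) \<in> first_columns k"
  then have "i \<in> {1..n}" "i' \<in> {1..n}" "\<pi> i = \<pi> i'"
    by (auto simp: mem_first_columns_iff rows_upto_def)
  then show "i = i'" using row_pi by metis
qed

lemma pcol_first_columns: "i \<in> rows_upto k \<Longrightarrow> pcol (first_columns k) i = \<pi> i"
  using pcol_eqI[OF subperm_first_columns] by (simp add: mem_first_columns_iff)

lemma Ik_first_columns: "Ik k (first_columns k) = rows_upto k"
  using pi_in unfolding Ik_def mem_first_columns_iff rows_upto_def by auto

lemma kconvex_first_columns:
  assumes "1 \<le> k" "k \<le> n"
  shows "kconvex n k (first_columns k)"
  unfolding kconvex_iff
proof (intro conjI)
  show "\<forall>j\<in>{1..k}. \<exists>!i. (i, j) \<in> first_columns k"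
  proof
    fix j assume j: "j \<in> {1..k}"
    then have "(row j, j) \<in> first_columns k"
      using assms row_in pi_row unfolding mem_first_columns_iff rows_upto_def by auto
    moreover have "i = row j" if "(i, j) \<in> first_columns k" for i
      using that row_pi unfolding mem_first_columns_iff rows_upto_def by auto
    ultimately show "\<exists>!i. (i, j) \<in> first_columns k" by blast
  qed
  let ?r = "Min (rows_upto k)" and ?s = "Max (rows_upto k)"
  have "discrete_convex ?r ?s (\<lambda>i. int (pcol (first_columns k) i))"
    unfolding discrete_convex_def
  proof (intro allI impI)
    fix i assume i: "?r \<le> i \<and> i + 2 \<le> ?s"
    then have "i \<in> rows_upto k" "i + 1 \<in> rows_upto k" "i + 2 \<in> rows_upto k"
      by (subst rows_upto_eq_Icc(1)[OF assms]; simp)+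
    moreover from this have "1 \<le> i" "i + 2 \<le> n" unfolding rows_upto_def by auto
    ultimately show "int (pcol (first_columns k) (i + 1)) - int (pcol (first_columns k) i)
        \<le> int (pcol (first_columns k) (i + 2)) - int (pcol (first_columns k) (i + 1))"
      using convex unfolding discrete_convex_def by (simp add: pcol_first_columns)
  qed
  then show "\<exists>r s. Ik k (first_columns k) = {r..s} \<and> discrete_convex r s (\<lambda>i. int (pcol (first_columns k) i))"
    using rows_upto_eq_Icc(1)[OF assms] Ik_first_columns by auto
qed (use assms subperm_first_columns in auto)

lemma row_Suc_in_Istar:
  assumes "1 \<le> k" "k < n"
  shows "row (Suc k) \<in> Istar n k (first_columns k)"
proof -
  let ?r = "Min (rows_upto k)" and ?s = "Max (rows_upto k)"
  have k: "1 \<le> k" "k \<le> n" "1 \<le> Suc k" "Suc k \<le> n" using assms by auto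
  have "row (Suc k) + 1 = ?r \<or> row (Suc k) = ?s + 1"
  proof (rule insert_Icc_eq_Icc_imp_adjacent)
    show "row (Suc k) \<notin> {?r..?s}"
      using rows_upto_Suc(2)[OF assms(2)] rows_upto_eq_Icc(1)[OF k(1,2)] by simp
    show "?r \<le> ?s" by (rule rows_upto_eq_Icc(2)[OF k(1,2)])
    show "insert (row (Suc k)) {?r..?s} = {Min (rows_upto (Suc k))..Max (rows_upto (Suc k))}"
      using rows_upto_Suc(1)[OF assms(2)] rows_upto_eq_Icc(1)[OF k(1,2)] rows_upto_eq_Icc(1)[OF k(3,4)]
      by simp
  qed
  moreover have "row (Suc k) \<in> {1..n}" using row_in k by simp
  moreover have "kconvex n (k + 1) (insert (row (Suc k), k + 1) (first_columns k))"
    using kconvex_first_columns[OF k(3,4)] first_columns_Suc[OF assms(2)] by simp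
  ultimately show ?thesis unfolding Istar_def Ik_first_columns by auto
qed

lemma alg_reach_first_columns:
  assumes "1 \<le> k" "k \<le> n"
  shows "alg_reach n k (first_columns k)"
  using assms
proof (induction k rule: dec_induct)
  case base
  have "rows_upto 1 = {row 1}"
    using base row_in pi_row row_pi pi_in unfolding rows_upto_def by force
  then have "first_columns 1 = {(row 1, 1)}"
    using pi_row base unfolding first_columns_def by auto
  then show ?case using alg_reach.start[OF row_in] base by simp
next
  case (step k)
  then have "alg_reach n (k + 1) (insert (row (Suc k), k + 1) (first_columns k))"
    using alg_reach.step row_Suc_in_Istar by simp
  then show ?case using first_columns_Suc step by simp
qed

lemma first_columns_eq_perm_matrix: "first_columns n = perm_matrix n \<pi>"
  using pi_in unfolding first_columns_def rows_upto_def perm_matrix_def by auto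

end

theorem lemma4p3:
  fixes n :: nat
  assumes "1 \<le> n"
  shows "(\<forall>P. alg_reach n n P \<longrightarrow> convex_perm_matrix n P)
       \<and> (\<forall>P. convex_perm_matrix n P \<longrightarrow> alg_reach n n P)"
proof (intro conjI allI impI)
  fix P assume "alg_reach n n P"
  then show "convex_perm_matrix n P"
    by (intro kconvex_imp_convex_perm_matrix alg_reach_kconvex)
next
  fix P assume "convex_perm_matrix n P"
  then obtain \<pi> where "bij_betw \<pi> {1..n} {1..n}" "discrete_convex 1 n (\<lambda>i. int (\<pi> i))"
    and P: "P = perm_matrix n \<pi>"
    unfolding convex_perm_matrix_iff by blast
  then interpret convex_permutation n \<pi> by unfold_locales
  show "alg_reach n n P"
    using alg_reach_first_columns[OF assms order_refl] first_columns_eq_perm_matrix P by simp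
qed

end
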